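(* Let $(X,d,f)$ be a topological dynamical system ($(X,d)$ compact metric, $f:X\to X$ continuous). Fix $\epsilon>0$, $\delta\in(0,1)$ and $n\in\mathbb N$. Then the function $\mathscr M_{\rm erg}(X,f)\to\mathbb R$, $\nu\mapsto N^\nu(n,\epsilon,\delta)$, is upper semi-continuous with respect to the weak* topology.
   Context: $\mathscr M_{\rm erg}(X,f)$ is the set of ergodic $f$-invariant Borel probability measures. $B_n(x,\epsilon)=\{y\in X:\max_{0\le i\le n-1}d(f^ix,f^iy)<\epsilon\}$. $N^\nu(n,\epsilon,\delta)$ is the minimal number of Bowen balls $B_n(x,\epsilon)$ whose union covers a set of $\nu$-measure larger than $1-\delta$. *)

theory Defs
  imports "HOL-Probability.Probability"
begin

definition bowen_ball :: "('a::metric_space \<Rightarrow> 'a) \<Rightarrow> nat \<Rightarrow> 'a \<Rightarrow> real \<Rightarrow> 'a set" where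
  "bowen_ball f n x eps = {y. \<forall>i<n. dist ((f ^^ i) x) ((f ^^ i) y) < eps}"

definition bowen_cover_number ::
  "('a::metric_space \<Rightarrow> 'a) \<Rightarrow> 'a measure \<Rightarrow> nat \<Rightarrow> real \<Rightarrow> real \<Rightarrow> nat" where
  "bowen_cover_number f \<nu> n eps \<delta> =
     (LEAST k. \<exists>C. finite C \<and> card C = k \<and>
                   measure \<nu> (\<Union>x\<in>C. bowen_ball f n x eps) > 1 - \<delta>)"

definition borel_prob_measures :: "'a::topological_space measure set" where
  "borel_prob_measures = {\<mu>. prob_space \<mu> \<and> sets \<mu> = sets borel}"

definition erg_measures :: "('a::topological_space \<Rightarrow> 'a) \<Rightarrow> 'a measure set" where
  "erg_measures f = {\<mu>. \<mu> \<in> borel_prob_measures \<and> f \<in> measurable \<mu> \<mu> \<and> distr \<mu> \<mu> f = \<mu> \<and>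
      (\<forall>A\<in>sets \<mu>. f -` A \<inter> space \<mu> = A \<longrightarrow> measure \<mu> A = 0 \<or> measure \<mu> A = 1)}"

definition weak_star_topology :: "'a::topological_space measure topology" where
  "weak_star_topology = topology_generated_by
     {{\<mu>\<in>borel_prob_measures. (\<integral>x. \<phi> x \<partial>\<mu>) \<in> U} | \<phi> U.
        continuous_on UNIV (\<phi> :: 'a \<Rightarrow> real) \<and> open U}"

definition usc_on :: "'b topology \<Rightarrow> 'b set \<Rightarrow> ('b \<Rightarrow> real) \<Rightarrow> bool" where
  "usc_on T E g \<longleftrightarrow> (\<forall>\<nu>\<in>E. \<forall>c. g \<nu> < c \<longrightarrow>
       (\<exists>W. openin T W \<and> \<nu> \<in> W \<and> (\<forall>\<mu>\<in>W \<inter> E. g \<mu> < c)))"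

end

theory Submission
  imports Defs
begin

text \<open>For the minimal cover C of \<nu>, the union U of its Bowen balls is open, and \<mu> \<mapsto> \<mu>(U) is
  weak* lower semicontinuous on open sets (approximate the indicator of U from below by the
  continuous functions min 1 (m \<cdot> infdist x (-U))). Hence \<mu>(U) > 1 - \<delta> persists on a weak*
  neighbourhood of \<nu>, where C is then still an admissible cover, so N^\<mu> \<le> N^\<nu> there.\<close>

lemma continuous_on_funpow:
  fixes f :: "'a::topological_space \<Rightarrow> 'a"
  assumes "continuous_on UNIV f"
  shows "continuous_on UNIV (f ^^ i)"
proof (induction i)
  case 0
  then show ?case by (simp add: id_def continuous_on_id)
next
  case (Suc i)
  then show ?case
    using continuous_on_compose[OF Suc.IH continuous_on_subset[OF assms]] by simp
qed

lemma open_bowen_ball: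
  assumes "continuous_on UNIV (f :: 'a::metric_space \<Rightarrow> 'a)"
  shows "open (bowen_ball f n x eps)"
proof -
  have "bowen_ball f n x eps = (\<Inter>i<n. {y. dist ((f ^^ i) x) ((f ^^ i) y) < eps})"
    unfolding bowen_ball_def by auto
  moreover have "open {y. dist ((f ^^ i) x) ((f ^^ i) y) < eps}" for i
    by (intro open_Collect_less continuous_intros continuous_on_funpow assms)
  ultimately show ?thesis by auto
qed

lemma finite_bowen_cover:
  fixes f :: "'a::metric_space \<Rightarrow> 'a"
  assumes "compact (UNIV :: 'a set)" and "continuous_on UNIV f" and "eps > 0"
  obtains D where "finite D" and "(\<Union>x\<in>D. bowen_ball f n x eps) = UNIV"
proof -
  have "UNIV \<subseteq> (\<Union>x\<in>UNIV. bowen_ball f n x eps)"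
    using assms(3) by (auto simp: bowen_ball_def)
  with open_bowen_ball[OF assms(2)] obtain D
    where "D \<subseteq> UNIV" "finite D" "UNIV \<subseteq> (\<Union>x\<in>D. bowen_ball f n x eps)"
    by (rule compactE_image[OF assms(1)])
  then show ?thesis using that by blast
qed

lemma borel_prob_measuresD:
  assumes "\<mu> \<in> borel_prob_measures"
  shows "prob_space \<mu>" and "sets \<mu> = sets borel" and "space \<mu> = UNIV"
  using assms sets_eq_imp_space_eq[of \<mu> borel] by (auto simp: borel_prob_measures_def)

lemma bowen_cover_number_attained:
  fixes f :: "'a::metric_space \<Rightarrow> 'a"
  assumes "compact (UNIV :: 'a set)" and "continuous_on UNIV f" and "eps > 0" and "\<delta> > 0"
    and "\<nu> \<in> borel_prob_measures"
  obtains C where "finite C" and "card C = bowen_cover_number f \<nu> n eps \<delta>"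
    and "measure \<nu> (\<Union>x\<in>C. bowen_ball f n x eps) > 1 - \<delta>"
proof -
  let ?P = "\<lambda>k. \<exists>C. finite C \<and> card C = k \<and> measure \<nu> (\<Union>x\<in>C. bowen_ball f n x eps) > 1 - \<delta>"
  obtain D where D: "finite D" "(\<Union>x\<in>D. bowen_ball f n x eps) = UNIV"
    using finite_bowen_cover[OF assms(1-3)] by blast
  have "measure \<nu> UNIV = 1"
    using borel_prob_measuresD[OF assms(5)] prob_space.prob_space by metis
  then have "?P (card D)" using D assms(4) by auto
  then have "?P (LEAST k. ?P k)" by (rule LeastI)
  then show ?thesis using that unfolding bowen_cover_number_def by blast
qed

lemma bowen_cover_number_le:
  assumes "finite C" and "measure \<mu> (\<Union>x\<in>C. bowen_ball f n x eps) > 1 - \<delta>"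
  shows "bowen_cover_number f \<mu> n eps \<delta> \<le> card C"
  unfolding bowen_cover_number_def using assms by (intro Least_le) blast

lemma openin_weak_star_integral_gt:
  assumes "continuous_on UNIV (\<phi> :: 'a::topological_space \<Rightarrow> real)"
  shows "openin weak_star_topology {\<mu>\<in>borel_prob_measures. t < (\<integral>x. \<phi> x \<partial>\<mu>)}"
  unfolding weak_star_topology_def
  by (rule topology_generated_by_Basis)
    (use assms in \<open>auto intro!: exI[of _ \<phi>] exI[of _ "{t<..}"]\<close>)

lemma continuous_approx_indicator_open:
  fixes U :: "'a::metric_space set"
  assumes "open U"
  obtains \<phi> :: "nat \<Rightarrow> 'a \<Rightarrow> real"
  where "\<And>m. continuous_on UNIV (\<phi> m)" and "\<And>m x. 0 \<le> \<phi> m x" and "\<And>m x. \<phi> m x \<le> indicator U x"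
    and "\<And>x. (\<lambda>m. \<phi> m x) \<longlonglongrightarrow> indicator U x"
proof (cases "U = UNIV")
  \<comment> \<open>Separate case because infdist x {} = 0.\<close>
  case True
  then show ?thesis using that[of "\<lambda>_ _. 1"] by auto
next
  case False
  then have nonempty: "- U \<noteq> {}" by auto
  define \<phi> where "\<phi> m x = min 1 (real m * infdist x (- U))" for m x
  have le: "\<phi> m x \<le> indicator U x" for m x
    by (cases "x \<in> U") (auto simp: \<phi>_def infdist_zero)
  have "(\<lambda>m. \<phi> m x) \<longlonglongrightarrow> indicator U x" for x
  proof (cases "x \<in> U")
    case True
    then have pos: "infdist x (- U) > 0"
      using infdist_pos_not_in_closed[of "- U" x] assms nonempty by auto
    obtain N where N: "real N > 1 / infdist x (- U)" using reals_Archimedean2 by blast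
    have "\<phi> m x = 1" if "m \<ge> N" for m
    proof -
      have "1 < real N * infdist x (- U)" using N pos by (simp add: field_simps)
      also have "\<dots> \<le> real m * infdist x (- U)" using that pos by (intro mult_right_mono) auto
      finally show ?thesis by (simp add: \<phi>_def)
    qed
    then show ?thesis
      using True by (intro tendsto_eventually) (auto simp: eventually_sequentially)
  next
    case False
    then show ?thesis by (simp add: \<phi>_def infdist_zero)
  qed
  moreover have "continuous_on UNIV (\<phi> m)" for m
    unfolding \<phi>_def by (intro continuous_intros)
  moreover have "0 \<le> \<phi> m x" for m x
    unfolding \<phi>_def by (simp add: infdist_nonneg)
  ultimately show ?thesis using that le by blast
qed

lemma weak_star_lsc_measure_open:
  fixes U :: "'a::metric_space set"
  assumes \<nu>: "\<nu> \<in> borel_prob_measures" and U: "open U" and gt: "measure \<nu> U > t"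
  shows "\<exists>W. openin weak_star_topology W \<and> \<nu> \<in> W \<and> (\<forall>\<mu>\<in>W. measure \<mu> U > t)"
proof -
  obtain \<phi> :: "nat \<Rightarrow> 'a \<Rightarrow> real" where cont: "\<And>m. continuous_on UNIV (\<phi> m)"
    and nonneg: "\<And>m x. 0 \<le> \<phi> m x" and le: "\<And>m x. \<phi> m x \<le> indicator U x"
    and lim: "\<And>x. (\<lambda>m. \<phi> m x) \<longlonglongrightarrow> indicator U x"
    using continuous_approx_indicator_open[OF U] by blast
  have bounded: "norm (\<phi> m x) \<le> 1" for m x
    using nonneg[of m x] le[of m x] by (cases "x \<in> U") auto
  have integrable: "integrable \<mu> (\<phi> m)" "\<phi> m \<in> borel_measurable \<mu>"
    and U_sets: "U \<in> sets \<mu>" and measure_eq: "integral\<^sup>L \<mu> (indicator U) = measure \<mu> U"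
    if "\<mu> \<in> borel_prob_measures" for \<mu> m
  proof -
    note \<mu> = borel_prob_measuresD[OF that]
    show meas: "\<phi> m \<in> borel_measurable \<mu>"
      using borel_measurable_continuous_onI[OF cont] measurable_cong_sets[OF \<mu>(2) refl] by blast
    show "integrable \<mu> (\<phi> m)"
      using bounded meas prob_space.finite_measure[OF \<mu>(1)]
      by (intro finite_measure.integrable_const_bound[where B=1]) auto
    show "U \<in> sets \<mu>" using U \<mu>(2) by simp
    then show "integral\<^sup>L \<mu> (indicator U) = measure \<mu> U" by simp
  qed
  note \<nu>' = borel_prob_measuresD[OF \<nu>]
  have "(\<lambda>m. integral\<^sup>L \<nu> (\<phi> m)) \<longlonglongrightarrow> integral\<^sup>L \<nu> (indicator U)"
    by (rule integral_dominated_convergence[where w="\<lambda>_. 1"])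
      (use U_sets[OF \<nu>] integrable[OF \<nu>] lim bounded prob_space.finite_measure[OF \<nu>'(1)]
        in \<open>auto intro: finite_measure.integrable_const\<close>)
  then have "eventually (\<lambda>m. integral\<^sup>L \<nu> (\<phi> m) > t) sequentially"
    using gt measure_eq[OF \<nu>] by (simp add: order_tendstoD(1))
  then obtain m where m: "integral\<^sup>L \<nu> (\<phi> m) > t" by (auto simp: eventually_sequentially)
  define W where "W = {\<mu>\<in>borel_prob_measures. t < (\<integral>x. \<phi> m x \<partial>\<mu>)}"
  have "measure \<mu> U > t" if "\<mu> \<in> W" for \<mu>
  proof -
    have \<mu>: "\<mu> \<in> borel_prob_measures" using that by (simp add: W_def)
    have "t < integral\<^sup>L \<mu> (\<phi> m)" using that by (simp add: W_def)
    also have "integral\<^sup>L \<mu> (\<phi> m) \<le> integral\<^sup>L \<mu> (indicator U)"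
      using integrable[OF \<mu>] le U_sets[OF \<mu>]
        prob_space.finite_measure[OF borel_prob_measuresD(1)[OF \<mu>]]
      by (intro integral_mono) (auto intro: finite_measure.integrable_const_bound[where B=1])
    finally show ?thesis using measure_eq[OF \<mu>] by simp
  qed
  moreover have "openin weak_star_topology W"
    unfolding W_def by (rule openin_weak_star_integral_gt[OF cont])
  moreover have "\<nu> \<in> W" using \<nu> m by (simp add: W_def)
  ultimately show ?thesis by blast
qed

theorem lemma4p3:
  fixes f :: "'a::metric_space \<Rightarrow> 'a" and eps \<delta> :: real and n :: nat
  assumes "compact (UNIV :: 'a set)"
    and "continuous_on UNIV f"
    and "eps > 0" and "0 < \<delta>" and "\<delta> < 1"
  shows "usc_on weak_star_topology (erg_measures f)
           (\<lambda>\<nu>. real (bowen_cover_number f \<nu> n eps \<delta>))"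
  unfolding usc_on_def
proof (intro ballI allI impI)
  fix \<nu> and c :: real
  assume "\<nu> \<in> erg_measures f" and lt: "real (bowen_cover_number f \<nu> n eps \<delta>) < c"
  then have \<nu>: "\<nu> \<in> borel_prob_measures" by (simp add: erg_measures_def)
  obtain C where C: "finite C" "card C = bowen_cover_number f \<nu> n eps \<delta>"
    "measure \<nu> (\<Union>x\<in>C. bowen_ball f n x eps) > 1 - \<delta>"
    using bowen_cover_number_attained[OF assms(1-4) \<nu>] by blast
  have "open (\<Union>x\<in>C. bowen_ball f n x eps)" using open_bowen_ball[OF assms(2)] by auto
  then obtain W where "openin weak_star_topology W" "\<nu> \<in> W"
    and W: "\<forall>\<mu>\<in>W. measure \<mu> (\<Union>x\<in>C. bowen_ball f n x eps) > 1 - \<delta>"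
    using weak_star_lsc_measure_open[OF \<nu> _ C(3)] by blast
  moreover have "real (bowen_cover_number f \<mu> n eps \<delta>) < c" if "\<mu> \<in> W" for \<mu>
    using bowen_cover_number_le[OF C(1) W[rule_format, OF that]] C(2) lt by linarith
  ultimately show "\<exists>W. openin weak_star_topology W \<and> \<nu> \<in> W \<and>
          (\<forall>\<mu>\<in>W \<inter> erg_measures f. real (bowen_cover_number f \<mu> n eps \<delta>) < c)"
    by blast
qed

end
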